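(* Let $H$ be a Hopf algebra over $\mathbb{C}$ with antipode $S$ and $A$ a left $H$-module algebra. On the Kadison bialgebroid $(A\otimes A^{op})\bowtie H$ (underlying space $A\otimes A\otimes H$) with product $(a\otimes b\otimes h)(a'\otimes b'\otimes h')=a(h_{(1)}\triangleright a')\otimes b'(S(h'_{(2)})\triangleright b)\otimes h_{(2)}h'_{(1)}$, source $a\mapsto a\otimes1\otimes1$, target $a\mapsto1\otimes a\otimes1$, coproduct $(a\otimes b)\otimes h\mapsto((a\otimes1)\otimes h_{(1)})\otimes_A((1\otimes b)\otimes h_{(2)})$ and counit $(a\otimes b)\otimes h\mapsto a(h\triangleright b)$, the map $\nu:\mathcal K\otimes_{A^{op}}\mathcal K\to\mathcal K\otimes_A\mathcal K$, $(a\otimes b\otimes h)\otimes(a'\otimes b'\otimes h')\mapsto(a\otimes1\otimes h_{(1)})\otimes_A\big((h_{(2)}\triangleright a')\otimes b'(S(h'_{(2)})\triangleright b)\otimes h_{(3)}h'_{(1)}\big)$, is bijective, with inverse $(a\otimes b\otimes h)\otimes_A(a'\otimes b'\otimes h')\mapsto(a\otimes1\otimes h_{(1)})\otimes_{A^{op}}\big((b\otimes1\otimes S(h_{(2)}))\cdot(a'\otimes b'\otimes h')\big)$. Hence $(A\otimes A^{op})\bowtie H$ is a left $\times_A$-Hopf algebra.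
   Context: A left $R$-bialgebroid is a $\mathbb{C}$-algebra $\mathcal K$ with algebra maps $\mathfrak s:R\to\mathcal K$ (source), $\mathfrak t:R^{op}\to\mathcal K$ (target) with commuting ranges, $R$-bimodule structure $r_1\cdot k\cdot r_2=\mathfrak s(r_1)\mathfrak t(r_2)k$, and $R$-bimodule maps $\Delta(k)=k_{(1)}\otimes_R k_{(2)}$, $\varepsilon:\mathcal K\to R$ forming a coassociative counital $R$-coring, with $k_{(1)}\mathfrak t(r)\otimes_R k_{(2)}=k_{(1)}\otimes_R k_{(2)}\mathfrak s(r)$, $\Delta(1)=1\otimes_R1$, $\Delta(kk')=k_{(1)}k'_{(1)}\otimes_R k_{(2)}k'_{(2)}$, $\varepsilon(1)=1_R$, $\varepsilon(kk')=\varepsilon(k\mathfrak s(\varepsilon(k')))$. It is a left $\times_R$-Hopf algebra if $\nu:\mathcal K\otimes_{R^{op}}\mathcal K\to\mathcal K\otimes_R\mathcal K$, $k\otimes k'\mapsto k_{(1)}\otimes_R k_{(2)}k'$, is bijective, where the domain is balanced by $k\mathfrak t(r)\otimes k'=k\otimes\mathfrak t(r)k'$. Here $\mathcal K=(A\otimes A^{op})\bowtie H$ and $R=A$. The Kadison structure is taken as a left $A$-bialgebroid (Kadison). *)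

theory Defs
  imports Complex_Main
begin

locale calg = module sc
  for sc :: "complex \<Rightarrow> 'a::{ring,monoid_mult} \<Rightarrow> 'a" +
  assumes scale_mult_left: "sc c (x * y) = sc c x * y"
      and scale_mult_right: "sc c (x * y) = x * sc c y"

text \<open>Elements of a tensor product are represented by finite lists of simple
  tensors (scalars absorbed in the first factor). Two representatives are equal in
  the tensor product iff every multilinear (resp. balanced multilinear) complex
  valued functional agrees on them (functionals separate points of the quotient).\<close>

definition lin_c :: "(complex \<Rightarrow> 'a::ab_group_add \<Rightarrow> 'a) \<Rightarrow> ('a \<Rightarrow> complex) \<Rightarrow> bool" where
  "lin_c s f \<longleftrightarrow> (\<forall>x y. f (x + y) = f x + f y) \<and> (\<forall>c x. f (s c x) = c * f x)"

definition bilin_c where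
  "bilin_c s1 s2 (\<phi> :: 'a::ab_group_add \<Rightarrow> 'b::ab_group_add \<Rightarrow> complex) \<longleftrightarrow>
     (\<forall>b. lin_c s1 (\<lambda>a. \<phi> a b)) \<and> (\<forall>a. lin_c s2 (\<lambda>b. \<phi> a b))"

definition trilin_c where
  "trilin_c s1 s2 s3 (\<phi> :: 'a::ab_group_add \<Rightarrow> 'b::ab_group_add \<Rightarrow> 'c::ab_group_add \<Rightarrow> complex) \<longleftrightarrow>
     (\<forall>b c. lin_c s1 (\<lambda>a. \<phi> a b c)) \<and> (\<forall>a c. lin_c s2 (\<lambda>b. \<phi> a b c))
     \<and> (\<forall>a b. lin_c s3 (\<lambda>c. \<phi> a b c))"

definition teq2 where
  "teq2 s1 s2 (xs :: ('a::ab_group_add \<times> 'b::ab_group_add) list) ys \<longleftrightarrow>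
     (\<forall>\<phi>. bilin_c s1 s2 \<phi> \<longrightarrow>
        (\<Sum>(a,b)\<leftarrow>xs. \<phi> a b) = (\<Sum>(a,b)\<leftarrow>ys. \<phi> a b))"

definition teq3 where
  "teq3 s1 s2 s3 (xs :: ('a::ab_group_add \<times> 'b::ab_group_add \<times> 'c::ab_group_add) list) ys \<longleftrightarrow>
     (\<forall>\<phi>. trilin_c s1 s2 s3 \<phi> \<longrightarrow>
        (\<Sum>(a,b,c)\<leftarrow>xs. \<phi> a b c) = (\<Sum>(a,b,c)\<leftarrow>ys. \<phi> a b c))"

text \<open>A Hopf algebra over the complex numbers. The coproduct is given by a
  representative Sweedler sum (list of pairs) of the element of H tensor H.\<close>

locale hopf_alg = calg sH
  for sH :: "complex \<Rightarrow> 'h::{ring,monoid_mult} \<Rightarrow> 'h" +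
  fixes \<Delta> :: "'h \<Rightarrow> ('h \<times> 'h) list"
    and \<epsilon> :: "'h \<Rightarrow> complex"
    and S :: "'h \<Rightarrow> 'h"
  assumes cop_add: "teq2 sH sH (\<Delta> (x + y)) (\<Delta> x @ \<Delta> y)"
      and cop_scale: "teq2 sH sH (\<Delta> (sH c x)) (map (\<lambda>(u,v). (sH c u, v)) (\<Delta> x))"
      and cop_coassoc: "teq3 sH sH sH
            (concat (map (\<lambda>(x,y). map (\<lambda>(u,v). (u,v,y)) (\<Delta> x)) (\<Delta> h)))
            (concat (map (\<lambda>(x,y). map (\<lambda>(u,v). (x,u,v)) (\<Delta> y)) (\<Delta> h)))"
      and cop_mult: "teq2 sH sH (\<Delta> (x * y))
            (concat (map (\<lambda>(a,b). map (\<lambda>(c,d). (a * c, b * d)) (\<Delta> y)) (\<Delta> x)))"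
      and cop_one: "teq2 sH sH (\<Delta> 1) [(1, 1)]"
      and counit_add: "\<epsilon> (x + y) = \<epsilon> x + \<epsilon> y"
      and counit_scale: "\<epsilon> (sH c x) = c * \<epsilon> x"
      and counit_mult: "\<epsilon> (x * y) = \<epsilon> x * \<epsilon> y"
      and counit_one: "\<epsilon> 1 = 1"
      and counit_left: "(\<Sum>(a,b)\<leftarrow>\<Delta> h. sH (\<epsilon> a) b) = h"
      and counit_right: "(\<Sum>(a,b)\<leftarrow>\<Delta> h. sH (\<epsilon> b) a) = h"
      and antipode_add: "S (x + y) = S x + S y"
      and antipode_scale: "S (sH c x) = sH c (S x)"
      and antipode_left: "(\<Sum>(a,b)\<leftarrow>\<Delta> h. S a * b) = sH (\<epsilon> h) 1"
      and antipode_right: "(\<Sum>(a,b)\<leftarrow>\<Delta> h. a * S b) = sH (\<epsilon> h) 1"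

locale module_alg = hopf_alg sH \<Delta> \<epsilon> S + A: calg sA
  for sH :: "complex \<Rightarrow> 'h::{ring,monoid_mult} \<Rightarrow> 'h"
  and \<Delta> \<epsilon> S
  and sA :: "complex \<Rightarrow> 'a::{ring,monoid_mult} \<Rightarrow> 'a" +
  fixes act :: "'h \<Rightarrow> 'a \<Rightarrow> 'a"
  assumes act_add_left: "act (h + k) x = act h x + act k x"
      and act_scale_left: "act (sH c h) x = sA c (act h x)"
      and act_add_right: "act h (x + y) = act h x + act h y"
      and act_scale_right: "act h (sA c x) = sA c (act h x)"
      and act_one: "act 1 x = x"
      and act_mult: "act (h * k) x = act h (act k x)"
      and act_prod: "act h (x * y) = (\<Sum>(h1,h2)\<leftarrow>\<Delta> h. act h1 x * act h2 y)"
      and act_unit: "act h 1 = sA (\<epsilon> h) 1"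

text \<open>Elements of K = A \<otimes> A \<otimes> H are lists of triples (a,b,h).\<close>

definition kmul1 ::
  "('h \<Rightarrow> ('h \<times> 'h) list) \<Rightarrow> ('h \<Rightarrow> 'h) \<Rightarrow> ('h \<Rightarrow> 'a \<Rightarrow> 'a)
   \<Rightarrow> ('a::{ring,monoid_mult} \<times> 'a \<times> 'h::{ring,monoid_mult})
   \<Rightarrow> ('a \<times> 'a \<times> 'h) \<Rightarrow> ('a \<times> 'a \<times> 'h) list" where
  "kmul1 \<Delta> S act k k' = (case k of (a,b,h) \<Rightarrow> case k' of (a',b',h') \<Rightarrow>
     concat (map (\<lambda>(h1,h2). map (\<lambda>(h1',h2').
        (a * act h1 a', b' * act (S h2') b, h2 * h1')) (\<Delta> h')) (\<Delta> h)))"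

definition kmul where
  "kmul \<Delta> S act xs ys = concat (map (\<lambda>x. concat (map (\<lambda>y. kmul1 \<Delta> S act x y) ys)) xs)"

definition ksrc :: "'a \<Rightarrow> ('a::{ring,monoid_mult} \<times> 'a \<times> 'h::{ring,monoid_mult}) list" where
  "ksrc r = [(r, 1, 1)]"

definition ktgt :: "'a \<Rightarrow> ('a::{ring,monoid_mult} \<times> 'a \<times> 'h::{ring,monoid_mult}) list" where
  "ktgt r = [(1, r, 1)]"

definition kdelta ::
  "('h \<Rightarrow> ('h \<times> 'h) list) \<Rightarrow> ('a::{ring,monoid_mult} \<times> 'a \<times> 'h::{ring,monoid_mult})
   \<Rightarrow> (('a \<times> 'a \<times> 'h) \<times> ('a \<times> 'a \<times> 'h)) list" where
  "kdelta \<Delta> k = (case k of (a,b,h) \<Rightarrow> map (\<lambda>(h1,h2). ((a,1,h1),(1,b,h2))) (\<Delta> h))"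

definition ktens :: "'k list \<Rightarrow> 'k list \<Rightarrow> ('k \<times> 'k) list" where
  "ktens xs ys = concat (map (\<lambda>x. map (\<lambda>y. (x,y)) ys) xs)"

definition multilin6 where
  "multilin6 sA sH (\<phi> :: 'a::ab_group_add \<Rightarrow> 'a \<Rightarrow> 'h::ab_group_add \<Rightarrow> 'a \<Rightarrow> 'a \<Rightarrow> 'h \<Rightarrow> complex) \<longleftrightarrow>
     (\<forall>b h a' b' h'. lin_c sA (\<lambda>a. \<phi> a b h a' b' h')) \<and>
     (\<forall>a h a' b' h'. lin_c sA (\<lambda>b. \<phi> a b h a' b' h')) \<and>
     (\<forall>a b a' b' h'. lin_c sH (\<lambda>h. \<phi> a b h a' b' h')) \<and>
     (\<forall>a b h b' h'. lin_c sA (\<lambda>a'. \<phi> a b h a' b' h')) \<and>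
     (\<forall>a b h a' h'. lin_c sA (\<lambda>b'. \<phi> a b h a' b' h')) \<and>
     (\<forall>a b h a' b'. lin_c sH (\<lambda>h'. \<phi> a b h a' b' h'))"

definition Phi where
  "Phi \<phi> xs = (\<Sum>((a,b,h),(a',b',h'))\<leftarrow>xs. \<phi> a b h a' b' h')"

text \<open>K \<otimes>_A K: balanced by (k \<cdot> r) \<otimes> k' = k \<otimes> (r \<cdot> k'),
  where k \<cdot> r = t(r) k and r \<cdot> k' = s(r) k'.\<close>
definition teqA where
  "teqA sA sH \<Delta> S act xs ys \<longleftrightarrow>
     (\<forall>\<phi>. multilin6 sA sH \<phi> \<and>
        (\<forall>k k' r. Phi \<phi> (ktens (kmul \<Delta> S act (ktgt r) k) k')
                 = Phi \<phi> (ktens k (kmul \<Delta> S act (ksrc r) k')))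
        \<longrightarrow> Phi \<phi> xs = Phi \<phi> ys)"

text \<open>K \<otimes>_{A^op} K: balanced by k t(r) \<otimes> k' = k \<otimes> t(r) k'.\<close>
definition teqAop where
  "teqAop sA sH \<Delta> S act xs ys \<longleftrightarrow>
     (\<forall>\<phi>. multilin6 sA sH \<phi> \<and>
        (\<forall>k k' r. Phi \<phi> (ktens (kmul \<Delta> S act k (ktgt r)) k')
                 = Phi \<phi> (ktens k (kmul \<Delta> S act (ktgt r) k')))
        \<longrightarrow> Phi \<phi> xs = Phi \<phi> ys)"

definition nu where
  "nu \<Delta> S act xs = concat (map (\<lambda>(k,k').
      concat (map (\<lambda>(k1,k2). map (\<lambda>z. (k1, z)) (kmul \<Delta> S act [k2] [k'])) (kdelta \<Delta> k))) xs)"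

definition nu_expl where
  "nu_expl \<Delta> S act xs = concat (map (\<lambda>((a,b,h),(a',b',h')).
      concat (map (\<lambda>(h1,y). concat (map (\<lambda>(h2,h3). map (\<lambda>(g1,g2).
          ((a, 1, h1), (act h2 a', b' * act (S g2) b, h3 * g1))) (\<Delta> h')) (\<Delta> y))) (\<Delta> h))) xs)"

definition nu_inv where
  "nu_inv \<Delta> S act xs = concat (map (\<lambda>((a,b,h),(a',b',h')).
      concat (map (\<lambda>(h1,h2). map (\<lambda>z. ((a, 1, h1), z))
         (kmul \<Delta> S act [(b, 1, S h2)] [(a', b', h')])) (\<Delta> h))) xs)"

end

theory Submission
  imports Defs
begin

text \<open>Multilinear functionals separate the balanced tensor products, so every claim is an
  identity between functionals. Composing with \<open>\<nu>\<close>, or with the proposed inverse, turns a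
  multilinear functional on \<open>K \<otimes> K\<close> into another one given by an explicit Sweedler formula.
  These pullbacks are balanced over \<open>A\<^sup>o\<^sup>p\<close> (resp. over \<open>A\<close>) for every multilinear
  functional, which makes both maps well defined. Pulling back along the two composites gives the
  identity: coassociativity, the antipode axioms and the anti-comultiplicativity of \<open>S\<close> collapse
  the iterated coproducts, and the balancing of the original functional absorbs the remaining
  factor of \<open>A\<close>.\<close>

lemma lin_c_zero: "lin_c s f \<Longrightarrow> f 0 = 0"
  by (metis add_0 add_cancel_left_left lin_c_def)

lemma lin_c_sum_list: "lin_c s f \<Longrightarrow> f (\<Sum>x\<leftarrow>xs. g x) = (\<Sum>x\<leftarrow>xs. f (g x))"
  by (induction xs) (auto simp: lin_c_def lin_c_zero)

lemma bilin_cD: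
  assumes "bilin_c s1 s2 K"
  shows "K (x + y) b = K x b + K y b" "K (s1 c x) b = c * K x b"
    "K a (x + y) = K a x + K a y" "K a (s2 c x) = c * K a x"
  using assms by (auto simp: bilin_c_def lin_c_def)

lemma sum_list_concat: "sum_list (concat xss) = sum_list (map sum_list xss)"
  by (induction xss) auto

lemma sum_list_commute:
  "(\<Sum>x\<leftarrow>xs. \<Sum>y\<leftarrow>ys. f x y) = (\<Sum>y\<leftarrow>ys. \<Sum>x\<leftarrow>xs. (f x y :: 'z::comm_monoid_add))"
  by (induction xs) (simp_all add: sum_list_addf)

section \<open>Sweedler sums\<close>

text \<open>The Sweedler expression \<open>G(h\<^sub>1, h\<^sub>2)\<close>, computed on the chosen representative of
  \<open>\<Delta> h\<close>; it is independent of that choice only for bilinear \<open>G\<close>.\<close>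

definition sweedler :: "('h \<Rightarrow> ('h \<times> 'h) list) \<Rightarrow> 'h \<Rightarrow> ('h \<Rightarrow> 'h \<Rightarrow> complex) \<Rightarrow> complex" where
  "sweedler D h G = (\<Sum>(a,b)\<leftarrow>D h. G a b)"

lemma sweedler_add_fun [simp]: "sweedler D h (\<lambda>a b. F a b + G a b) = sweedler D h F + sweedler D h G"
  by (simp add: sweedler_def split_def sum_list_addf)

lemma sweedler_cmult [simp]: "sweedler D h (\<lambda>a b. c * F a b) = c * sweedler D h F"
  by (simp add: sweedler_def split_def sum_list_const_mult)

lemma sweedler_commute:
  "sweedler D x (\<lambda>a b. sweedler D' y (\<lambda>c d. F a b c d)) = sweedler D' y (\<lambda>c d. sweedler D x (\<lambda>a b. F a b c d))"
  unfolding sweedler_def split_def by (rule sum_list_commute)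

section \<open>Hopf algebra identities for functionals\<close>

context hopf_alg begin

lemma sweedler_add: "bilin_c sH sH G \<Longrightarrow> sweedler \<Delta> (x + y) G = sweedler \<Delta> x G + sweedler \<Delta> y G"
  using cop_add[of x y] unfolding teq2_def sweedler_def by simp

lemma sweedler_scale:
  assumes "bilin_c sH sH G" shows "sweedler \<Delta> (sH c x) G = c * sweedler \<Delta> x G"
proof -
  have "sweedler \<Delta> (sH c x) G = (\<Sum>(a,b)\<leftarrow>map (\<lambda>(u,v). (sH c u, v)) (\<Delta> x). G a b)"
    using cop_scale[of c x] assms unfolding teq2_def sweedler_def by blast
  also have "\<dots> = (\<Sum>(a,b)\<leftarrow>\<Delta> x. c * G a b)"
    using assms unfolding bilin_c_def lin_c_def by (simp add: o_def split_def)
  finally show ?thesis by (simp add: sweedler_def split_def sum_list_const_mult)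
qed

lemma sweedler_coassoc:
  "trilin_c sH sH sH T \<Longrightarrow>
   sweedler \<Delta> h (\<lambda>x y. sweedler \<Delta> x (\<lambda>u v. T u v y)) = sweedler \<Delta> h (\<lambda>x y. sweedler \<Delta> y (\<lambda>u v. T x u v))"
  using cop_coassoc[of h] unfolding teq3_def sweedler_def
  by (simp add: sum_list_concat map_concat o_def split_def)

lemma sweedler_mult:
  "bilin_c sH sH G \<Longrightarrow>
   sweedler \<Delta> (x * y) G = sweedler \<Delta> x (\<lambda>a b. sweedler \<Delta> y (\<lambda>c d. G (a * c) (b * d)))"
  using cop_mult[of x y] unfolding teq2_def sweedler_def
  by (simp add: sum_list_concat map_concat o_def split_def)

lemma sweedler_one: "bilin_c sH sH G \<Longrightarrow> sweedler \<Delta> 1 G = G 1 1"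
  using cop_one unfolding teq2_def sweedler_def by simp

lemma sweedler_lin_c: "lin_c sH F \<Longrightarrow> F (\<Sum>(a,b)\<leftarrow>\<Delta> h. g a b) = sweedler \<Delta> h (\<lambda>a b. F (g a b))"
  unfolding sweedler_def split_def by (rule lin_c_sum_list)

lemma sweedler_counit_left: "lin_c sH F \<Longrightarrow> sweedler \<Delta> h (\<lambda>a b. \<epsilon> a * F b) = F h"
  using sweedler_lin_c[where F=F and h=h and g="\<lambda>a b. sH (\<epsilon> a) b"] by (simp add: counit_left lin_c_def)

lemma sweedler_counit_right: "lin_c sH F \<Longrightarrow> sweedler \<Delta> h (\<lambda>a b. \<epsilon> b * F a) = F h"
  using sweedler_lin_c[where F=F and h=h and g="\<lambda>a b. sH (\<epsilon> b) a"] by (simp add: counit_right lin_c_def)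

lemma sweedler_antipode_left: "lin_c sH F \<Longrightarrow> sweedler \<Delta> h (\<lambda>a b. F (S a * b)) = \<epsilon> h * F 1"
  using sweedler_lin_c[where F=F and h=h and g="\<lambda>a b. S a * b"] by (simp add: antipode_left lin_c_def)

lemma sweedler_antipode_right: "lin_c sH F \<Longrightarrow> sweedler \<Delta> h (\<lambda>a b. F (a * S b)) = \<epsilon> h * F 1"
  using sweedler_lin_c[where F=F and h=h and g="\<lambda>a b. a * S b"] by (simp add: antipode_right lin_c_def)

lemmas hopf_lin_simps = lin_c_def bilin_c_def trilin_c_def distrib_left distrib_right
  scale_mult_left[symmetric] scale_mult_right[symmetric] antipode_add antipode_scale
  counit_add counit_scale sweedler_add sweedler_scale

lemma counit_antipode: "\<epsilon> (S h) = \<epsilon> h"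
proof -
  have "\<epsilon> h = sweedler \<Delta> h (\<lambda>a b. \<epsilon> (S a * b))"
    by (subst sweedler_antipode_left) (simp_all add: hopf_lin_simps counit_one)
  also have "\<dots> = sweedler \<Delta> h (\<lambda>a b. \<epsilon> b * \<epsilon> (S a))"
    by (simp add: counit_mult mult.commute)
  also have "\<dots> = \<epsilon> (S h)"
    by (rule sweedler_counit_right) (simp add: hopf_lin_simps)
  finally show ?thesis by simp
qed

lemma lin_c_antipode_one: assumes "lin_c sH F" shows "F (S 1) = F 1"
proof -
  have "F 1 = sweedler \<Delta> 1 (\<lambda>a b. F (S a * b))"
    using sweedler_antipode_left[OF assms] by (simp add: counit_one)
  also have "\<dots> = F (S 1)"
    using assms by (subst sweedler_one) (simp_all add: hopf_lin_simps)
  finally show ?thesis by simp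
qed

lemma sweedler_mult_antipode_cancel_left:
  "bilin_c sH sH G \<Longrightarrow> sweedler \<Delta> h (\<lambda>x y. sweedler \<Delta> x (\<lambda>u v. G (u * S v) y)) = G 1 h"
  by (subst sweedler_antipode_right, simp add: bilin_c_def)
     (rule sweedler_counit_left, simp add: bilin_c_def)

lemma sweedler_mult_antipode_cancel_right:
  "bilin_c sH sH G \<Longrightarrow> sweedler \<Delta> h (\<lambda>x y. sweedler \<Delta> y (\<lambda>u v. G x (u * S v))) = G h 1"
  by (subst sweedler_antipode_right, simp add: bilin_c_def)
     (rule sweedler_counit_right, simp add: bilin_c_def)

lemma sweedler_antipode_mult_cancel_right:
  "bilin_c sH sH G \<Longrightarrow> sweedler \<Delta> h (\<lambda>x y. sweedler \<Delta> y (\<lambda>u v. G x (S u * v))) = G h 1"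
  by (subst sweedler_antipode_left, simp add: bilin_c_def)
     (rule sweedler_counit_right, simp add: bilin_c_def)

lemma sweedler_twisted_antipode_unit:
  assumes K: "bilin_c sH sH K"
  shows "sweedler \<Delta> q (\<lambda>c d. sweedler \<Delta> c (\<lambda>c1 c2. sweedler \<Delta> d (\<lambda>d1 d2.
           K (c1 * S d2) (c2 * S d1)))) = \<epsilon> q * K 1 1"
proof -
  note K' = bilin_cD[OF K]
  have "sweedler \<Delta> q (\<lambda>c d. sweedler \<Delta> c (\<lambda>c1 c2. sweedler \<Delta> d (\<lambda>d1 d2. K (c1 * S d2) (c2 * S d1))))
      = sweedler \<Delta> q (\<lambda>c1 y. sweedler \<Delta> y (\<lambda>c2 d. sweedler \<Delta> d (\<lambda>d1 d2. K (c1 * S d2) (c2 * S d1))))"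
    by (rule sweedler_coassoc) (simp add: hopf_lin_simps K')
  also have "\<dots> = sweedler \<Delta> q (\<lambda>c1 y. sweedler \<Delta> y (\<lambda>z d2. sweedler \<Delta> z (\<lambda>c2 d1. K (c1 * S d2) (c2 * S d1))))"
    by (subst sweedler_coassoc) (simp_all add: hopf_lin_simps K')
  also have "\<dots> = sweedler \<Delta> q (\<lambda>c1 y. K (c1 * S y) 1)"
    by (subst sweedler_mult_antipode_cancel_left) (simp_all add: hopf_lin_simps K')
  also have "\<dots> = \<epsilon> q * K 1 1"
    by (rule sweedler_antipode_right[where F="\<lambda>m. K m 1"]) (simp add: hopf_lin_simps K')
  finally show ?thesis .
qed

text \<open>Both \<open>\<Delta> \<circ> S\<close> and \<open>(S \<otimes> S) \<circ> \<Delta>\<^sup>o\<^sup>p\<close> are convolution inverses of \<open>\<Delta>\<close>; the computation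
  below is the uniqueness argument, the previous lemma being the inverse property of the latter.\<close>

lemma sweedler_antipode:
  assumes G: "bilin_c sH sH G"
  shows "sweedler \<Delta> (S h) G = sweedler \<Delta> h (\<lambda>a b. G (S b) (S a))"
proof -
  note G' = bilin_cD[OF G]
  define T where "T x c1 c2 d1 d2 = sweedler \<Delta> (S x) (\<lambda>s1 s2. G (s1 * (c1 * S d2)) (s2 * (c2 * S d1)))"
    for x c1 c2 d1 d2
  have inverse_right: "\<epsilon> q * sweedler \<Delta> (S x) G
      = sweedler \<Delta> q (\<lambda>c d. sweedler \<Delta> c (\<lambda>c1 c2. sweedler \<Delta> d (\<lambda>d1 d2. T x c1 c2 d1 d2)))" for x q
    unfolding T_def
    by (subst sweedler_twisted_antipode_unit[where K="\<lambda>u v. sweedler \<Delta> (S x) (\<lambda>s1 s2. G (s1 * u) (s2 * v))"])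
       (simp_all add: hopf_lin_simps G')
  have inverse_left: "sweedler \<Delta> w (\<lambda>x c. sweedler \<Delta> c (\<lambda>c1 c2. sweedler \<Delta> d (\<lambda>d1 d2. T x c1 c2 d1 d2)))
      = \<epsilon> w * sweedler \<Delta> d (\<lambda>d1 d2. G (S d2) (S d1))" for w d
  proof -
    have "sweedler \<Delta> c (\<lambda>c1 c2. sweedler \<Delta> d (\<lambda>d1 d2. T x c1 c2 d1 d2))
        = sweedler \<Delta> (S x * c) (\<lambda>m1 m2. sweedler \<Delta> d (\<lambda>d1 d2. G (m1 * S d2) (m2 * S d1)))" for x c
      unfolding T_def
      by (subst sweedler_mult, simp add: hopf_lin_simps G', subst sweedler_commute)
         (simp add: sweedler_commute[of _ "S x"] mult.assoc)
    then have "sweedler \<Delta> w (\<lambda>x c. sweedler \<Delta> c (\<lambda>c1 c2. sweedler \<Delta> d (\<lambda>d1 d2. T x c1 c2 d1 d2)))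
        = \<epsilon> w * sweedler \<Delta> 1 (\<lambda>m1 m2. sweedler \<Delta> d (\<lambda>d1 d2. G (m1 * S d2) (m2 * S d1)))"
      by (simp only:) (rule sweedler_antipode_left, simp add: hopf_lin_simps G')
    then show ?thesis
      by (subst (asm) sweedler_one) (simp_all add: hopf_lin_simps G')
  qed
  have "sweedler \<Delta> (S h) G = sweedler \<Delta> h (\<lambda>x q. \<epsilon> q * sweedler \<Delta> (S x) G)"
    by (rule sweedler_counit_right[symmetric]) (simp add: hopf_lin_simps G')
  also have "\<dots> = sweedler \<Delta> h (\<lambda>w d. sweedler \<Delta> w (\<lambda>x c. sweedler \<Delta> c (\<lambda>c1 c2.
                    sweedler \<Delta> d (\<lambda>d1 d2. T x c1 c2 d1 d2))))"
    unfolding inverse_right T_def by (rule sweedler_coassoc[symmetric]) (simp add: hopf_lin_simps G')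
  also have "\<dots> = sweedler \<Delta> h (\<lambda>d1 d2. G (S d2) (S d1))"
    unfolding inverse_left by (rule sweedler_counit_left) (simp add: hopf_lin_simps G')
  finally show ?thesis .
qed

lemma sweedler_mult_antipode_cancel_middle:
  assumes F1: "\<And>y z w. lin_c sH (\<lambda>x. F x y z w)" and F2: "\<And>x z w. lin_c sH (\<lambda>y. F x y z w)"
    and F3: "\<And>x y w. lin_c sH (\<lambda>z. F x y z w)" and F4: "\<And>x y z. lin_c sH (\<lambda>w. F x y z w)"
  shows "sweedler \<Delta> h (\<lambda>h1 h2. sweedler \<Delta> h2 (\<lambda>t1 t2. sweedler \<Delta> h1 (\<lambda>v1 v2.
           sweedler \<Delta> v2 (\<lambda>p1 p2. F v1 p1 (p2 * S t1) t2))))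
       = sweedler \<Delta> h (\<lambda>v1 y. sweedler \<Delta> y (\<lambda>p1 z. F v1 p1 1 z))"
proof -
  have F: "\<And>x x' y z w. F (x + x') y z w = F x y z w + F x' y z w"
    "\<And>c x y z w. F (sH c x) y z w = c * F x y z w"
    "\<And>x y y' z w. F x (y + y') z w = F x y z w + F x y' z w"
    "\<And>c x y z w. F x (sH c y) z w = c * F x y z w"
    "\<And>x y z z' w. F x y (z + z') w = F x y z w + F x y z' w"
    "\<And>c x y z w. F x y (sH c z) w = c * F x y z w"
    "\<And>x y z w w'. F x y z (w + w') = F x y z w + F x y z w'"
    "\<And>c x y z w. F x y z (sH c w) = c * F x y z w"
    using F1 F2 F3 F4 by (simp_all add: lin_c_def)
  \<comment> \<open>the simplifier meets \<open>F\<close> eta-contracted in its last argument\<close>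
  have F_eta: "\<And>x x' y z. F (x + x') y z = (\<lambda>w. F x y z w + F x' y z w)"
    "\<And>c x y z. F (sH c x) y z = (\<lambda>w. c * F x y z w)"
    "\<And>x y y' z. F x (y + y') z = (\<lambda>w. F x y z w + F x y' z w)"
    "\<And>c x y z. F x (sH c y) z = (\<lambda>w. c * F x y z w)"
    "\<And>x y z z'. F x y (z + z') = (\<lambda>w. F x y z w + F x y z' w)"
    "\<And>c x y z. F x y (sH c z) = (\<lambda>w. c * F x y z w)"
    by (simp_all add: F fun_eq_iff)
  define T where "T v1 p1 p2 h2 = sweedler \<Delta> h2 (\<lambda>t1 t2. F v1 p1 (p2 * S t1) t2)" for v1 p1 p2 h2
  have commute: "sweedler \<Delta> h2 (\<lambda>t1 t2. sweedler \<Delta> h1 (\<lambda>v1 v2. sweedler \<Delta> v2 (\<lambda>p1 p2. F v1 p1 (p2 * S t1) t2)))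
      = sweedler \<Delta> h1 (\<lambda>v1 v2. sweedler \<Delta> v2 (\<lambda>p1 p2. T v1 p1 p2 h2))" for h1 h2
    unfolding T_def by (subst sweedler_commute, subst (2) sweedler_commute) (rule refl)
  have cancel: "sweedler \<Delta> z (\<lambda>p2 h2. T v1 p1 p2 h2) = F v1 p1 1 z" for v1 p1 z
  proof -
    have "sweedler \<Delta> z (\<lambda>p2 h2. T v1 p1 p2 h2)
        = sweedler \<Delta> z (\<lambda>w t2. sweedler \<Delta> w (\<lambda>p2 t1. F v1 p1 (p2 * S t1) t2))"
      unfolding T_def by (rule sweedler_coassoc[symmetric]) (simp add: hopf_lin_simps F F_eta)
    also have "\<dots> = F v1 p1 1 z"
      by (rule sweedler_mult_antipode_cancel_left) (simp add: hopf_lin_simps F F_eta)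
    finally show ?thesis .
  qed
  have "sweedler \<Delta> h (\<lambda>h1 h2. sweedler \<Delta> h1 (\<lambda>v1 v2. sweedler \<Delta> v2 (\<lambda>p1 p2. T v1 p1 p2 h2)))
      = sweedler \<Delta> h (\<lambda>v1 y. sweedler \<Delta> y (\<lambda>v2 h2. sweedler \<Delta> v2 (\<lambda>p1 p2. T v1 p1 p2 h2)))"
    unfolding T_def by (rule sweedler_coassoc) (simp add: hopf_lin_simps F F_eta)
  also have "\<dots> = sweedler \<Delta> h (\<lambda>v1 y. sweedler \<Delta> y (\<lambda>p1 z. sweedler \<Delta> z (\<lambda>p2 h2. T v1 p1 p2 h2)))"
    unfolding T_def by (subst sweedler_coassoc) (simp_all add: hopf_lin_simps F F_eta)
  finally show ?thesis
    unfolding commute cancel .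
qed

end

section \<open>Functionals on \<open>K \<otimes> K\<close>\<close>

lemma multilin6D:
  assumes "multilin6 sA sH \<phi>"
  shows "\<phi> (x+y) b h a' b' h' = \<phi> x b h a' b' h' + \<phi> y b h a' b' h'"
    "\<phi> (sA c x) b h a' b' h' = c * \<phi> x b h a' b' h'"
    "\<phi> a (x+y) h a' b' h' = \<phi> a x h a' b' h' + \<phi> a y h a' b' h'"
    "\<phi> a (sA c x) h a' b' h' = c * \<phi> a x h a' b' h'"
    "\<phi> a b (u+v) a' b' h' = \<phi> a b u a' b' h' + \<phi> a b v a' b' h'"
    "\<phi> a b (sH c u) a' b' h' = c * \<phi> a b u a' b' h'"
    "\<phi> a b h (x+y) b' h' = \<phi> a b h x b' h' + \<phi> a b h y b' h'"
    "\<phi> a b h (sA c x) b' h' = c * \<phi> a b h x b' h'"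
    "\<phi> a b h a' (x+y) h' = \<phi> a b h a' x h' + \<phi> a b h a' y h'"
    "\<phi> a b h a' (sA c x) h' = c * \<phi> a b h a' x h'"
    "\<phi> a b h a' b' (u+v) = \<phi> a b h a' b' u + \<phi> a b h a' b' v"
    "\<phi> a b h a' b' (sH c u) = c * \<phi> a b h a' b' u"
  using assms unfolding multilin6_def lin_c_def by auto

lemma Phi_ktens_split: "Phi (\<phi> :: _ \<Rightarrow> _ \<Rightarrow> _ \<Rightarrow> _ \<Rightarrow> _ \<Rightarrow> _ \<Rightarrow> complex) (ktens ws zs) = (\<Sum>z\<leftarrow>zs. Phi \<phi> (ktens ws [z]))"
  unfolding Phi_def ktens_def
  by (simp add: sum_list_concat map_concat split_def o_def) (rule sum_list_commute)

lemma Phi_ktens_kmul_left: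
  "Phi (\<phi> :: _ \<Rightarrow> _ \<Rightarrow> _ \<Rightarrow> _ \<Rightarrow> _ \<Rightarrow> _ \<Rightarrow> complex) (ktens (kmul D S act xs ys) zs) =
   (\<Sum>x\<leftarrow>xs. \<Sum>y\<leftarrow>ys. \<Sum>z\<leftarrow>zs. Phi \<phi> (ktens (kmul D S act [x] [y]) [z]))"
proof -
  have "Phi \<phi> (ktens (kmul D S act xs ys) zs) = (\<Sum>x\<leftarrow>xs. \<Sum>y\<leftarrow>ys. Phi \<phi> (ktens (kmul D S act [x] [y]) zs))"
    by (simp add: Phi_def ktens_def kmul_def sum_list_concat map_concat split_def o_def)
  then show ?thesis by (subst (asm) Phi_ktens_split) simp
qed

lemma Phi_ktens_kmul_right:
  "Phi \<phi> (ktens xs (kmul D S act ys zs)) =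
   (\<Sum>x\<leftarrow>xs. \<Sum>y\<leftarrow>ys. \<Sum>z\<leftarrow>zs. Phi \<phi> (ktens [x] (kmul D S act [y] [z])))"
  by (simp add: Phi_def ktens_def kmul_def sum_list_concat map_concat split_def o_def)

lemma Phi_kmul_ktens_single:
  "Phi \<phi> (ktens (kmul D S act [(a1,b1,h1)] [(a2,b2,h2)]) [(a3,b3,h3)]) =
   sweedler D h1 (\<lambda>p1 p2. sweedler D h2 (\<lambda>g1 g2. \<phi> (a1 * act p1 a2) (b2 * act (S g2) b1) (p2 * g1) a3 b3 h3))"
  by (simp add: Phi_def ktens_def kmul_def kmul1_def sweedler_def sum_list_concat map_concat split_def o_def)

lemma Phi_ktens_kmul_single:
  "Phi \<phi> (ktens [(a1,b1,h1)] (kmul D S act [(a2,b2,h2)] [(a3,b3,h3)])) =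
   sweedler D h2 (\<lambda>p1 p2. sweedler D h3 (\<lambda>g1 g2. \<phi> a1 b1 h1 (a2 * act p1 a3) (b3 * act (S g2) b2) (p2 * g1)))"
  by (simp add: Phi_def ktens_def kmul_def kmul1_def sweedler_def sum_list_concat map_concat split_def o_def)

definition nu_pullback where
  "nu_pullback D S act \<phi> a b h a' b' h' = Phi \<phi> (nu D S act [((a,b,h),(a',b',h'))])"

definition nu_inv_pullback where
  "nu_inv_pullback D S act \<phi> a b h a' b' h' = Phi \<phi> (nu_inv D S act [((a,b,h),(a',b',h'))])"

lemma Phi_nu: "Phi \<phi> (nu D S act xs) = Phi (nu_pullback D S act \<phi>) xs"
  by (induction xs) (auto simp: Phi_def nu_def nu_pullback_def)

lemma Phi_nu_inv: "Phi \<phi> (nu_inv D S act xs) = Phi (nu_inv_pullback D S act \<phi>) xs"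
  by (induction xs) (auto simp: Phi_def nu_inv_def nu_inv_pullback_def)

lemma nu_pullback_eq:
  "nu_pullback D S act \<phi> a b h a' b' h' =
   sweedler D h (\<lambda>h1 h2. sweedler D h2 (\<lambda>p1 p2. sweedler D h' (\<lambda>g1 g2.
     \<phi> a 1 h1 (act p1 a') (b' * act (S g2) b) (p2 * g1))))"
  by (simp add: nu_pullback_def Phi_def nu_def kdelta_def kmul_def kmul1_def sweedler_def
      sum_list_concat map_concat split_def o_def)

lemma Phi_nu_expl: "Phi (\<phi> :: _ \<Rightarrow> _ \<Rightarrow> _ \<Rightarrow> _ \<Rightarrow> _ \<Rightarrow> _ \<Rightarrow> complex) (nu_expl D S act xs) = Phi \<phi> (nu D S act xs)"
proof -
  have "Phi \<phi> (nu_expl D S act [((a,b,h),(a',b',h'))]) = nu_pullback D S act \<phi> a b h a' b' h'"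
    for a b h a' b' h'
    by (simp add: nu_pullback_eq Phi_def nu_expl_def sweedler_def sum_list_concat map_concat split_def o_def)
  then show ?thesis
    unfolding Phi_nu by (induction xs) (auto simp: Phi_def nu_expl_def)
qed

lemma nu_inv_pullback_expand:
  "nu_inv_pullback D S act \<phi> a b h a' b' h' =
   sweedler D h (\<lambda>h1 h2. sweedler D (S h2) (\<lambda>s1 s2. sweedler D h' (\<lambda>g1 g2.
     \<phi> a 1 h1 (b * act s1 a') (b' * act (S g2) 1) (s2 * g1))))"
  by (simp add: nu_inv_pullback_def Phi_def nu_inv_def kmul_def kmul1_def sweedler_def
      sum_list_concat map_concat split_def o_def)

section \<open>Balanced functionals\<close>

definition A_balanced where
  "A_balanced D S act \<phi> \<longleftrightarrow>
     (\<forall>k k' r. Phi \<phi> (ktens (kmul D S act (ktgt r) k) k') = Phi \<phi> (ktens k (kmul D S act (ksrc r) k')))"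

definition Aop_balanced where
  "Aop_balanced D S act \<phi> \<longleftrightarrow>
     (\<forall>k k' r. Phi \<phi> (ktens (kmul D S act k (ktgt r)) k') = Phi \<phi> (ktens k (kmul D S act (ktgt r) k')))"

lemma teqA_iff:
  "teqA sA sH D S act xs ys \<longleftrightarrow>
   (\<forall>\<phi>. multilin6 sA sH \<phi> \<and> A_balanced D S act \<phi> \<longrightarrow> Phi \<phi> xs = Phi \<phi> ys)"
  by (simp add: teqA_def A_balanced_def)

lemma teqAop_iff:
  "teqAop sA sH D S act xs ys \<longleftrightarrow>
   (\<forall>\<phi>. multilin6 sA sH \<phi> \<and> Aop_balanced D S act \<phi> \<longrightarrow> Phi \<phi> xs = Phi \<phi> ys)"
  by (simp add: teqAop_def Aop_balanced_def)

context module_alg begin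

lemmas module_lin_simps = hopf_lin_simps act_add_left act_scale_left act_add_right act_scale_right
  A.scale_mult_left[symmetric] A.scale_mult_right[symmetric]

lemma sweedler_act_mult:
  "lin_c sA f \<Longrightarrow> f (act h (x * y)) = sweedler \<Delta> h (\<lambda>u v. f (act u x * act v y))"
  unfolding act_prod sweedler_def split_def by (rule lin_c_sum_list)

lemma sweedler_act_antipode_unit:
  assumes ml: "multilin6 sA sH \<phi>"
  shows "sweedler \<Delta> z (\<lambda>z1 z2. \<phi> x1 x2 x3 x4 (y * act (S z2) 1) (p * z1)) = \<phi> x1 x2 x3 x4 y (p * z)"
proof -
  note m = multilin6D[OF ml]
  have "sweedler \<Delta> z (\<lambda>z1 z2. \<phi> x1 x2 x3 x4 (y * act (S z2) 1) (p * z1))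
      = sweedler \<Delta> z (\<lambda>z1 z2. \<epsilon> z2 * \<phi> x1 x2 x3 x4 y (p * z1))"
    by (simp add: act_unit counit_antipode A.scale_mult_right[symmetric] m)
  also have "\<dots> = \<phi> x1 x2 x3 x4 y (p * z)"
    by (rule sweedler_counit_right) (simp add: module_lin_simps m)
  finally show ?thesis .
qed

lemma Phi_tgt_mult_ktens:
  assumes "multilin6 sA sH \<phi>"
  shows "Phi \<phi> (ktens (kmul \<Delta> S act (ktgt r) [(a,b,h)]) [(a',b',h')])
       = sweedler \<Delta> h (\<lambda>g1 g2. \<phi> a (b * act (S g2) r) g1 a' b' h')"
  using multilin6D[OF assms]
  by (simp add: ktgt_def Phi_kmul_ktens_single sweedler_one module_lin_simps act_one)

lemma Phi_ktens_src_mult: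
  assumes ml: "multilin6 sA sH \<phi>"
  shows "Phi \<phi> (ktens [(a,b,h)] (kmul \<Delta> S act (ksrc r) [(a',b',h')])) = \<phi> a b h (r * a') b' h'"
  using sweedler_act_antipode_unit[OF ml, where p=1] multilin6D[OF ml]
  by (simp add: ksrc_def Phi_ktens_kmul_single sweedler_one module_lin_simps act_one)

lemma Phi_mult_tgt_ktens:
  assumes ml: "multilin6 sA sH \<phi>"
  shows "Phi \<phi> (ktens (kmul \<Delta> S act [(a,b,h)] (ktgt r)) [(a',b',h')]) = \<phi> a (r * b) h a' b' h'"
proof -
  note m = multilin6D[OF ml]
  have "Phi \<phi> (ktens (kmul \<Delta> S act [(a,b,h)] (ktgt r)) [(a',b',h')])
      = sweedler \<Delta> h (\<lambda>p1 p2. \<epsilon> p1 * \<phi> a (r * act (S 1) b) p2 a' b' h')"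
    by (simp add: ktgt_def Phi_kmul_ktens_single sweedler_one module_lin_simps m act_unit
        A.scale_mult_right[symmetric])
  also have "\<dots> = \<phi> a (r * act (S 1) b) h a' b' h'"
    by (rule sweedler_counit_left) (simp add: module_lin_simps m)
  also have "\<dots> = \<phi> a (r * b) h a' b' h'"
    using lin_c_antipode_one[where F="\<lambda>x. \<phi> a (r * act x b) h a' b' h'"]
    by (simp add: module_lin_simps m act_one)
  finally show ?thesis .
qed

lemma Phi_ktens_tgt_mult:
  assumes "multilin6 sA sH \<phi>"
  shows "Phi \<phi> (ktens [(a,b,h)] (kmul \<Delta> S act (ktgt r) [(a',b',h')]))
       = sweedler \<Delta> h' (\<lambda>g1 g2. \<phi> a b h a' (b' * act (S g2) r) g1)"
  using multilin6D[OF assms]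
  by (simp add: ktgt_def Phi_ktens_kmul_single sweedler_one module_lin_simps act_one)

lemma A_balanced_iff:
  assumes ml: "multilin6 sA sH \<phi>"
  shows "A_balanced \<Delta> S act \<phi> \<longleftrightarrow>
    (\<forall>a b h a' b' h' r. sweedler \<Delta> h (\<lambda>g1 g2. \<phi> a (b * act (S g2) r) g1 a' b' h') = \<phi> a b h (r * a') b' h')"
    (is "_ \<longleftrightarrow> ?pointwise")
proof
  assume bal: "A_balanced \<Delta> S act \<phi>"
  show ?pointwise
  proof (intro allI)
    fix a b h a' b' h' r
    show "sweedler \<Delta> h (\<lambda>g1 g2. \<phi> a (b * act (S g2) r) g1 a' b' h') = \<phi> a b h (r * a') b' h'"
      using bal[unfolded A_balanced_def, rule_format, where k="[(a,b,h)]" and k'="[(a',b',h')]" and r=r]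
      by (simp only: Phi_tgt_mult_ktens[OF ml] Phi_ktens_src_mult[OF ml])
  qed
next
  assume pt: ?pointwise
  have "Phi \<phi> (ktens (kmul \<Delta> S act (ktgt r) [y]) [z]) = Phi \<phi> (ktens [y] (kmul \<Delta> S act (ksrc r) [z]))"
    for r y z
    by (cases y rule: prod_cases3; cases z rule: prod_cases3)
       (simp only: Phi_tgt_mult_ktens[OF ml] Phi_ktens_src_mult[OF ml] pt[rule_format])
  then show "A_balanced \<Delta> S act \<phi>"
    unfolding A_balanced_def
    by (subst Phi_ktens_kmul_left, subst Phi_ktens_kmul_right) (simp add: ktgt_def ksrc_def)
qed

lemma Aop_balanced_iff:
  assumes ml: "multilin6 sA sH \<phi>"
  shows "Aop_balanced \<Delta> S act \<phi> \<longleftrightarrow>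
    (\<forall>a b h a' b' h' r. \<phi> a (r * b) h a' b' h' = sweedler \<Delta> h' (\<lambda>g1 g2. \<phi> a b h a' (b' * act (S g2) r) g1))"
    (is "_ \<longleftrightarrow> ?pointwise")
proof
  assume bal: "Aop_balanced \<Delta> S act \<phi>"
  show ?pointwise
  proof (intro allI)
    fix a b h a' b' h' r
    show "\<phi> a (r * b) h a' b' h' = sweedler \<Delta> h' (\<lambda>g1 g2. \<phi> a b h a' (b' * act (S g2) r) g1)"
      using bal[unfolded Aop_balanced_def, rule_format, where k="[(a,b,h)]" and k'="[(a',b',h')]" and r=r]
      by (simp only: Phi_mult_tgt_ktens[OF ml] Phi_ktens_tgt_mult[OF ml])
  qed
next
  assume pt: ?pointwise
  have "Phi \<phi> (ktens (kmul \<Delta> S act [y] (ktgt r)) [z]) = Phi \<phi> (ktens [y] (kmul \<Delta> S act (ktgt r) [z]))"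
    for r y z
    by (cases y rule: prod_cases3; cases z rule: prod_cases3)
       (simp only: Phi_mult_tgt_ktens[OF ml] Phi_ktens_tgt_mult[OF ml] pt[rule_format])
  then show "Aop_balanced \<Delta> S act \<phi>"
    unfolding Aop_balanced_def
    by (subst Phi_ktens_kmul_left, subst Phi_ktens_kmul_right) (simp add: ktgt_def)
qed

section \<open>The pullbacks along \<open>\<nu>\<close> and its inverse\<close>

lemma nu_inv_pullback_eq:
  assumes ml: "multilin6 sA sH \<phi>"
  shows "nu_inv_pullback \<Delta> S act \<phi> a b h a' b' h' =
    sweedler \<Delta> h (\<lambda>h1 h2. sweedler \<Delta> (S h2) (\<lambda>s1 s2. \<phi> a 1 h1 (b * act s1 a') b' (s2 * h')))"
  unfolding nu_inv_pullback_expand by (simp only: sweedler_act_antipode_unit[OF ml])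

lemma nu_inv_pullback_eq_antipode:
  assumes ml: "multilin6 sA sH \<phi>"
  shows "nu_inv_pullback \<Delta> S act \<phi> a b h a' b' h' =
    sweedler \<Delta> h (\<lambda>h1 h2. sweedler \<Delta> h2 (\<lambda>t1 t2. \<phi> a 1 h1 (b * act (S t2) a') b' (S t1 * h')))"
  unfolding nu_inv_pullback_eq[OF ml]
  by (subst sweedler_antipode) (simp_all add: module_lin_simps multilin6D[OF ml])

lemma multilin6_nu_pullback: "multilin6 sA sH \<phi> \<Longrightarrow> multilin6 sA sH (nu_pullback \<Delta> S act \<phi>)"
  unfolding multilin6_def[of _ _ "nu_pullback \<Delta> S act \<phi>"] nu_pullback_eq
  by (simp add: module_lin_simps multilin6D)

lemma multilin6_nu_inv_pullback:
  assumes ml: "multilin6 sA sH \<phi>" shows "multilin6 sA sH (nu_inv_pullback \<Delta> S act \<phi>)"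
  unfolding multilin6_def[of _ _ "nu_inv_pullback \<Delta> S act \<phi>"] nu_inv_pullback_eq_antipode[OF ml]
  by (simp add: module_lin_simps multilin6D[OF ml])

text \<open>No balancing of \<open>\<phi>\<close> is needed here (nor below for the inverse): the first factor of
  every term of \<open>\<nu>\<close> has \<open>1\<close> in its \<open>A\<^sup>o\<^sup>p\<close> slot, so \<open>\<nu>\<close> is already well defined into the
  unbalanced tensor square.\<close>

lemma Aop_balanced_nu_pullback:
  assumes ml: "multilin6 sA sH \<phi>"
  shows "Aop_balanced \<Delta> S act (nu_pullback \<Delta> S act \<phi>)"
  unfolding Aop_balanced_iff[OF multilin6_nu_pullback[OF ml]]
proof (intro allI)
  fix a b h a' b' h' r
  note m = multilin6D[OF ml]
  define F where "F h1 p1 p2 g1 x y = \<phi> a 1 h1 (act p1 a') (b' * (act (S y) r * act (S x) b)) (p2 * g1)"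
    for h1 p1 p2 g1 x y
  have expand: "\<phi> a 1 h1 (act p1 a') (b' * act (S g2) (r * b)) (p2 * g1) = sweedler \<Delta> g2 (F h1 p1 p2 g1)"
    for h1 p1 p2 g1 g2
  proof -
    have "\<phi> a 1 h1 (act p1 a') (b' * act (S g2) (r * b)) (p2 * g1)
        = sweedler \<Delta> (S g2) (\<lambda>u v. \<phi> a 1 h1 (act p1 a') (b' * (act u r * act v b)) (p2 * g1))"
      by (rule sweedler_act_mult[where f="\<lambda>z. \<phi> a 1 h1 (act p1 a') (b' * z) (p2 * g1)"])
         (simp add: module_lin_simps m)
    also have "\<dots> = sweedler \<Delta> g2 (F h1 p1 p2 g1)"
      unfolding F_def by (subst sweedler_antipode) (simp_all add: module_lin_simps m)
    finally show ?thesis .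
  qed
  have coassoc: "sweedler \<Delta> h' (\<lambda>g1 g2. sweedler \<Delta> g2 (F h1 p1 p2 g1))
      = sweedler \<Delta> h' (\<lambda>q1 q2. sweedler \<Delta> q1 (\<lambda>g1 g2. F h1 p1 p2 g1 g2 q2))" for h1 p1 p2
    by (rule sweedler_coassoc[symmetric]) (simp add: module_lin_simps m F_def)
  have commute: "sweedler \<Delta> h' (\<lambda>q1 q2. nu_pullback \<Delta> S act \<phi> a b h a' (b' * act (S q2) r) q1)
      = sweedler \<Delta> h (\<lambda>h1 h2. sweedler \<Delta> h2 (\<lambda>p1 p2. sweedler \<Delta> h' (\<lambda>q1 q2.
          sweedler \<Delta> q1 (\<lambda>g1 g2. F h1 p1 p2 g1 g2 q2))))"
    unfolding nu_pullback_eq F_def mult.assoc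
    by (subst sweedler_commute, subst (2) sweedler_commute) (rule refl)
  show "nu_pullback \<Delta> S act \<phi> a (r * b) h a' b' h'
      = sweedler \<Delta> h' (\<lambda>q1 q2. nu_pullback \<Delta> S act \<phi> a b h a' (b' * act (S q2) r) q1)"
    unfolding commute unfolding nu_pullback_eq expand coassoc by (rule refl)
qed

lemma A_balanced_nu_inv_pullback:
  assumes ml: "multilin6 sA sH \<phi>"
  shows "A_balanced \<Delta> S act (nu_inv_pullback \<Delta> S act \<phi>)"
  unfolding A_balanced_iff[OF multilin6_nu_inv_pullback[OF ml]]
proof (intro allI)
  fix a b h a' b' h' r
  note m = multilin6D[OF ml]
  define W where "W h1 t1 u1 u2 = \<phi> a 1 h1 (b * (act (S u2) r * act (S u1) a')) b' (S t1 * h')"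
    for h1 t1 u1 u2
  have expand: "\<phi> a 1 h1 (b * act (S t2) (r * a')) b' (S t1 * h') = sweedler \<Delta> t2 (W h1 t1)" for h1 t1 t2
  proof -
    have "\<phi> a 1 h1 (b * act (S t2) (r * a')) b' (S t1 * h')
        = sweedler \<Delta> (S t2) (\<lambda>u v. \<phi> a 1 h1 (b * (act u r * act v a')) b' (S t1 * h'))"
      by (rule sweedler_act_mult[where f="\<lambda>z. \<phi> a 1 h1 (b * z) b' (S t1 * h')"])
         (simp add: module_lin_simps m)
    also have "\<dots> = sweedler \<Delta> t2 (W h1 t1)"
      unfolding W_def by (subst sweedler_antipode) (simp_all add: module_lin_simps m)
    finally show ?thesis .
  qed
  have coassoc_inner: "sweedler \<Delta> h2 (\<lambda>t1 t2. sweedler \<Delta> t2 (W h1 t1))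
      = sweedler \<Delta> h2 (\<lambda>x u2. sweedler \<Delta> x (\<lambda>t1 u1. W h1 t1 u1 u2))" for h1 h2
    by (rule sweedler_coassoc[symmetric]) (simp add: module_lin_simps m W_def)
  have coassoc_outer: "sweedler \<Delta> h (\<lambda>h1 h2. sweedler \<Delta> h2 (\<lambda>x u2. sweedler \<Delta> x (\<lambda>t1 u1. W h1 t1 u1 u2)))
      = sweedler \<Delta> h (\<lambda>y u2. sweedler \<Delta> y (\<lambda>h1 x. sweedler \<Delta> x (\<lambda>t1 u1. W h1 t1 u1 u2)))"
    by (rule sweedler_coassoc[symmetric]) (simp add: module_lin_simps m W_def)
  have "nu_inv_pullback \<Delta> S act \<phi> a b h (r * a') b' h'
      = sweedler \<Delta> h (\<lambda>y u2. sweedler \<Delta> y (\<lambda>h1 x. sweedler \<Delta> x (\<lambda>t1 u1. W h1 t1 u1 u2)))"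
    unfolding nu_inv_pullback_eq_antipode[OF ml] expand coassoc_inner coassoc_outer by (rule refl)
  also have "\<dots> = sweedler \<Delta> h (\<lambda>g1 g2. nu_inv_pullback \<Delta> S act \<phi> a (b * act (S g2) r) g1 a' b' h')"
    unfolding nu_inv_pullback_eq_antipode[OF ml] W_def by (simp only: mult.assoc)
  finally show "sweedler \<Delta> h (\<lambda>g1 g2. nu_inv_pullback \<Delta> S act \<phi> a (b * act (S g2) r) g1 a' b' h')
      = nu_inv_pullback \<Delta> S act \<phi> a b h (r * a') b' h'" by simp
qed

lemma nu_inv_pullback_nu_pullback:
  assumes ml: "multilin6 sA sH \<phi>" and bal: "A_balanced \<Delta> S act \<phi>"
  shows "nu_inv_pullback \<Delta> S act (nu_pullback \<Delta> S act \<phi>) = \<phi>"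
proof (intro ext)
  fix a b h a' b' h'
  note m = multilin6D[OF ml]
  have pt: "sweedler \<Delta> v (\<lambda>g1 g2. \<phi> a (1 * act (S g2) r) g1 a' b' h') = \<phi> a 1 v (r * a') b' h'" for v r
    using bal unfolding A_balanced_iff[OF ml] by blast
  have act_expand: "\<phi> a 1 v1 (act p1 (b * act (S z) a')) b' h'
      = sweedler \<Delta> p1 (\<lambda>w1 w2. \<phi> a 1 v1 (act w1 b * act (w2 * S z) a') b' h')" for v1 p1 z
    by (subst sweedler_act_mult[where f="\<lambda>x. \<phi> a 1 v1 x b' h'"]) (simp_all add: module_lin_simps m act_mult)
  have cancel_a': "sweedler \<Delta> y (\<lambda>p1 z. \<phi> a 1 v1 (act p1 (b * act (S z) a')) b' h')
      = \<phi> a 1 v1 (act y b * a') b' h'" for v1 y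
  proof -
    have "sweedler \<Delta> y (\<lambda>p1 z. \<phi> a 1 v1 (act p1 (b * act (S z) a')) b' h')
        = sweedler \<Delta> y (\<lambda>w1 x. sweedler \<Delta> x (\<lambda>w2 z. \<phi> a 1 v1 (act w1 b * act (w2 * S z) a') b' h'))"
      unfolding act_expand by (rule sweedler_coassoc) (simp add: module_lin_simps m)
    also have "\<dots> = \<phi> a 1 v1 (act y b * act 1 a') b' h'"
      by (rule sweedler_mult_antipode_cancel_right[where G="\<lambda>w1 x. \<phi> a 1 v1 (act w1 b * act x a') b' h'"])
         (simp add: module_lin_simps m)
    finally show ?thesis by (simp add: act_one)
  qed
  have "nu_inv_pullback \<Delta> S act (nu_pullback \<Delta> S act \<phi>) a b h a' b' h'
      = sweedler \<Delta> h (\<lambda>h1 h2. sweedler \<Delta> h2 (\<lambda>t1 t2. sweedler \<Delta> h1 (\<lambda>v1 v2. sweedler \<Delta> v2 (\<lambda>p1 p2.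
          \<phi> a 1 v1 (act p1 (b * act (S t2) a')) b' ((p2 * S t1) * h')))))"
    unfolding nu_inv_pullback_eq_antipode[OF multilin6_nu_pullback[OF ml]] nu_pullback_eq
    by (simp only: sweedler_act_antipode_unit[OF ml] mult.assoc)
  also have "\<dots> = sweedler \<Delta> h (\<lambda>v1 y. sweedler \<Delta> y (\<lambda>p1 z. \<phi> a 1 v1 (act p1 (b * act (S z) a')) b' h'))"
    by (subst sweedler_mult_antipode_cancel_middle
        [where F="\<lambda>v1 p1 x z. \<phi> a 1 v1 (act p1 (b * act (S z) a')) b' (x * h')"])
       (simp_all add: module_lin_simps m)
  also have "\<dots> = sweedler \<Delta> h (\<lambda>v1 y. sweedler \<Delta> v1 (\<lambda>g1 g2. \<phi> a (act (S g2 * y) b) g1 a' b' h'))"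
    unfolding cancel_a' pt[symmetric] by (simp add: act_mult)
  also have "\<dots> = sweedler \<Delta> h (\<lambda>g1 x. sweedler \<Delta> x (\<lambda>g2 y. \<phi> a (act (S g2 * y) b) g1 a' b' h'))"
    by (rule sweedler_coassoc) (simp add: module_lin_simps m)
  also have "\<dots> = \<phi> a b h a' b' h'"
    by (subst sweedler_antipode_mult_cancel_right[where G="\<lambda>g1 x. \<phi> a (act x b) g1 a' b' h'"])
       (simp_all add: module_lin_simps m act_one)
  finally show "nu_inv_pullback \<Delta> S act (nu_pullback \<Delta> S act \<phi>) a b h a' b' h' = \<phi> a b h a' b' h'" .
qed

lemma nu_pullback_nu_inv_pullback:
  assumes ml: "multilin6 sA sH \<phi>" and bal: "Aop_balanced \<Delta> S act \<phi>"
  shows "nu_pullback \<Delta> S act (nu_inv_pullback \<Delta> S act \<phi>) = \<phi>"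
proof (intro ext)
  fix a b h a' b' h'
  note m = multilin6D[OF ml]
  define \<Lambda> where "\<Lambda> = (\<lambda>v1 m1 m2 g1 g2. \<phi> a 1 v1 (act m1 a') (b' * act (S g2) b) (m2 * g1))"
  define G where "G v1 x = sweedler \<Delta> x (\<lambda>m1 m2. sweedler \<Delta> h' (\<Lambda> v1 m1 m2))" for v1 x
  have merge: "sweedler \<Delta> h2 (\<lambda>p1 p2. sweedler \<Delta> h' (\<lambda>g1 g2. sweedler \<Delta> h1 (\<lambda>v1 v2.
        sweedler \<Delta> (S v2) (\<lambda>s1 s2. \<Lambda> v1 (s1 * p1) (s2 * p2) g1 g2))))
      = sweedler \<Delta> h1 (\<lambda>v1 v2. G v1 (S v2 * h2))" for h1 h2
  proof -
    have "sweedler \<Delta> h2 (\<lambda>p1 p2. sweedler \<Delta> h' (\<lambda>g1 g2. sweedler \<Delta> h1 (\<lambda>v1 v2.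
          sweedler \<Delta> (S v2) (\<lambda>s1 s2. \<Lambda> v1 (s1 * p1) (s2 * p2) g1 g2))))
        = sweedler \<Delta> h1 (\<lambda>v1 v2. sweedler \<Delta> (S v2) (\<lambda>s1 s2. sweedler \<Delta> h2 (\<lambda>p1 p2.
          sweedler \<Delta> h' (\<Lambda> v1 (s1 * p1) (s2 * p2)))))"
      by (subst (2) sweedler_commute, subst sweedler_commute, subst (3) sweedler_commute,
          subst (2) sweedler_commute) (rule refl)
    also have "\<dots> = sweedler \<Delta> h1 (\<lambda>v1 v2. G v1 (S v2 * h2))"
      unfolding G_def by (subst sweedler_mult) (simp_all add: module_lin_simps m \<Lambda>_def)
    finally show ?thesis .
  qed
  have "nu_pullback \<Delta> S act (nu_inv_pullback \<Delta> S act \<phi>) a b h a' b' h'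
      = sweedler \<Delta> h (\<lambda>h1 h2. sweedler \<Delta> h2 (\<lambda>p1 p2. sweedler \<Delta> h' (\<lambda>g1 g2. sweedler \<Delta> h1 (\<lambda>v1 v2.
          sweedler \<Delta> (S v2) (\<lambda>s1 s2. \<Lambda> v1 (s1 * p1) (s2 * p2) g1 g2)))))"
    unfolding nu_pullback_eq nu_inv_pullback_eq[OF ml] \<Lambda>_def by (simp add: act_mult mult.assoc)
  also have "\<dots> = sweedler \<Delta> h (\<lambda>v1 y. sweedler \<Delta> y (\<lambda>v2 h2. G v1 (S v2 * h2)))"
    unfolding merge by (rule sweedler_coassoc) (simp add: module_lin_simps m \<Lambda>_def G_def)
  also have "\<dots> = G h 1"
    by (rule sweedler_antipode_mult_cancel_right) (simp add: module_lin_simps m \<Lambda>_def G_def)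
  also have "\<dots> = sweedler \<Delta> h' (\<lambda>g1 g2. \<phi> a 1 h a' (b' * act (S g2) b) g1)"
    unfolding G_def \<Lambda>_def by (subst sweedler_one) (simp_all add: module_lin_simps m act_one)
  also have "\<dots> = \<phi> a b h a' b' h'"
    using bal unfolding Aop_balanced_iff[OF ml] by (metis mult_1_right)
  finally show "nu_pullback \<Delta> S act (nu_inv_pullback \<Delta> S act \<phi>) a b h a' b' h' = \<phi> a b h a' b' h'" .
qed

lemma teqA_nu_if_teqAop:
  "teqAop sA sH \<Delta> S act xs ys \<Longrightarrow> teqA sA sH \<Delta> S act (nu \<Delta> S act xs) (nu \<Delta> S act ys)"
  unfolding teqA_iff teqAop_iff Phi_nu
  using multilin6_nu_pullback Aop_balanced_nu_pullback by blast

lemma teqAop_nu_inv_if_teqA: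
  "teqA sA sH \<Delta> S act xs ys \<Longrightarrow> teqAop sA sH \<Delta> S act (nu_inv \<Delta> S act xs) (nu_inv \<Delta> S act ys)"
  unfolding teqA_iff teqAop_iff Phi_nu_inv
  using multilin6_nu_inv_pullback A_balanced_nu_inv_pullback by blast

lemma teqA_nu_expl_nu: "teqA sA sH \<Delta> S act (nu_expl \<Delta> S act xs) (nu \<Delta> S act xs)"
  by (simp add: teqA_iff Phi_nu_expl)

lemma teqA_nu_nu_inv: "teqA sA sH \<Delta> S act (nu \<Delta> S act (nu_inv \<Delta> S act xs)) xs"
  by (simp add: teqA_iff Phi_nu Phi_nu_inv nu_inv_pullback_nu_pullback)

lemma teqAop_nu_inv_nu: "teqAop sA sH \<Delta> S act (nu_inv \<Delta> S act (nu \<Delta> S act xs)) xs"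
  by (simp add: teqAop_iff Phi_nu Phi_nu_inv nu_pullback_nu_inv_pullback)

end

theorem mainTheorem10:
  fixes sH :: "complex \<Rightarrow> 'h::{ring,monoid_mult} \<Rightarrow> 'h"
    and \<Delta> :: "'h \<Rightarrow> ('h \<times> 'h) list"
    and \<epsilon> :: "'h \<Rightarrow> complex"
    and S :: "'h \<Rightarrow> 'h"
    and sA :: "complex \<Rightarrow> 'a::{ring,monoid_mult} \<Rightarrow> 'a"
    and act :: "'h \<Rightarrow> 'a \<Rightarrow> 'a"
  assumes "module_alg sH \<Delta> \<epsilon> S sA act"
  shows "(\<forall>xs ys. teqAop sA sH \<Delta> S act xs ys
            \<longrightarrow> teqA sA sH \<Delta> S act (nu \<Delta> S act xs) (nu \<Delta> S act ys))
       \<and> (\<forall>xs. teqA sA sH \<Delta> S act (nu_expl \<Delta> S act xs) (nu \<Delta> S act xs))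
       \<and> (\<forall>xs ys. teqA sA sH \<Delta> S act xs ys
            \<longrightarrow> teqAop sA sH \<Delta> S act (nu_inv \<Delta> S act xs) (nu_inv \<Delta> S act ys))
       \<and> (\<forall>xs. teqA sA sH \<Delta> S act (nu \<Delta> S act (nu_inv \<Delta> S act xs)) xs)
       \<and> (\<forall>xs. teqAop sA sH \<Delta> S act (nu_inv \<Delta> S act (nu \<Delta> S act xs)) xs)"
proof -
  interpret module_alg sH \<Delta> \<epsilon> S sA act by (rule assms)
  show ?thesis
    using teqA_nu_if_teqAop teqA_nu_expl_nu teqAop_nu_inv_if_teqA teqA_nu_nu_inv teqAop_nu_inv_nu
    by blast
qed

end
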